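(* Let $d\ge 2$ and let $\Lambda=\{\lambda_S:\emptyset\ne S\subseteq\mathbb{I}_d\}$ with all $\lambda_S>0$. If the survival copula of a random vector $\boldsymbol Z\in\mathbb{R}^d$ is the generalized Marshall–Olkin survival copula $\widehat C^{\mathrm{MO}(\Lambda)}$, then $\boldsymbol Z$ is mutually asymptotically independent.
   Context: Write $\mathbb{I}_d=\{1,\dots,d\}$. The generalized Marshall–Olkin survival copula with rate parameter $\Lambda$ is $\widehat C^{\mathrm{MO}(\Lambda)}(u_1,\dots,u_d)=\prod_{i=1}^d\prod_{S\subseteq\mathbb{I}_d,\,|S|=i}\ \min_{j\in S}u_j^{\eta_j^S}$ for $u_j\in[0,1]$, where $\eta_j^S=\lambda_S/\sum_{J\subseteq\mathbb{I}_d,\,J\ni j}\lambda_J$ for $j\in S$. For a survival copula $\widehat C$ and nonempty $S\subseteq\mathbb{I}_d$, $\widehat C_S$ denotes $\widehat C$ with the arguments outside $S$ set to $1$ (so $\widehat C_S(u)=u$ if $|S|=1$). A random vector with survival copula $\widehat C$ is mutually asymptotically independent if for every $S\subseteq\mathbb{I}_d$ with $|S|\ge2$ and every $\ell\in S$, $\lim_{u\downarrow0}\widehat C_S(u,\dots,u)/\widehat C_{S\setminus\{\ell\}}(u,\dots,u)=0$, with $0/0:=0$. *)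

theory Defs
  imports "HOL-Analysis.Analysis"
begin

definition MO_eta :: "nat \<Rightarrow> (nat set \<Rightarrow> real) \<Rightarrow> nat \<Rightarrow> nat set \<Rightarrow> real" where
  "MO_eta d lam j S = lam S / (\<Sum>J\<in>{J. J \<subseteq> {1..d} \<and> j \<in> J}. lam J)"

definition MO_survival_copula :: "nat \<Rightarrow> (nat set \<Rightarrow> real) \<Rightarrow> (nat \<Rightarrow> real) \<Rightarrow> real" where
  "MO_survival_copula d lam u =
     (\<Prod>i\<in>{1..d}. \<Prod>S\<in>{S. S \<subseteq> {1..d} \<and> card S = i}.
        Min ((\<lambda>j. u j powr MO_eta d lam j S) ` S))"

definition marginal_diag :: "((nat \<Rightarrow> real) \<Rightarrow> real) \<Rightarrow> nat set \<Rightarrow> real \<Rightarrow> real" where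
  "marginal_diag C S t = C (\<lambda>j. if j \<in> S then t else 1)"

text \<open>Mutual asymptotic independence of a random vector in R^d, expressed through its
  survival copula C (division by 0 yields 0 in HOL, matching the convention 0/0 := 0).\<close>
definition mutually_asympt_indep :: "nat \<Rightarrow> ((nat \<Rightarrow> real) \<Rightarrow> real) \<Rightarrow> bool" where
  "mutually_asympt_indep d C \<longleftrightarrow>
     (\<forall>S. S \<subseteq> {1..d} \<and> card S \<ge> 2 \<longrightarrow>
        (\<forall>l\<in>S. ((\<lambda>t. marginal_diag C S t / marginal_diag C (S - {l}) t) \<longlongrightarrow> 0) (at_right 0)))"

end

theory Submission
  imports Defs
begin

text \<open>The copula is a product over all nonempty \<open>T\<close> of factors \<open>min_{j\<in>T} u_j^{\<eta>_j^T}\<close>,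
  each nondecreasing in \<open>u\<close>. On the diagonal, \<open>C_S(t)\<close> has smaller arguments than
  \<open>C_{S-{l}}(t)\<close>, and the factor of \<open>T = {l}\<close> is \<open>t^e\<close> with \<open>e = \<eta>_l^{l} > 0\<close> in the former
  but \<open>1\<close> in the latter. Hence \<open>0 < C_S(t) / C_{S-{l}}(t) \<le> t^e\<close>, which tends to \<open>0\<close>.\<close>

lemma prod_nonempty_subsets_by_card:
  assumes "finite A"
  shows "(\<Prod>i\<in>{1..card A}. \<Prod>S\<in>{S. S \<subseteq> A \<and> card S = i}. f S)
       = (\<Prod>S\<in>{S. S \<subseteq> A \<and> S \<noteq> {}}. f S)"
proof -
  have "(\<Union>i\<in>{1..card A}. {S. S \<subseteq> A \<and> card S = i}) = {S. S \<subseteq> A \<and> S \<noteq> {}}"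
    using assms by (auto simp: card_mono Suc_le_eq card_gt_0_iff) (meson rev_finite_subset)
  moreover have "prod f (\<Union>i\<in>{1..card A}. {S. S \<subseteq> A \<and> card S = i})
      = (\<Prod>i\<in>{1..card A}. prod f {S. S \<subseteq> A \<and> card S = i})"
    using assms by (intro prod.UNION_disjoint) auto
  ultimately show ?thesis by simp
qed

definition MO_factor :: "nat \<Rightarrow> (nat set \<Rightarrow> real) \<Rightarrow> (nat \<Rightarrow> real) \<Rightarrow> nat set \<Rightarrow> real" where
  "MO_factor d lam u S = Min ((\<lambda>j. u j powr MO_eta d lam j S) ` S)"

lemma MO_factor_singleton: "MO_factor d lam u {l} = u l powr MO_eta d lam l {l}"
  by (simp add: MO_factor_def)

lemma MO_survival_copula_eq_prod_factor:
  "MO_survival_copula d lam u = (\<Prod>S\<in>{S. S \<subseteq> {1..d} \<and> S \<noteq> {}}. MO_factor d lam u S)"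
  using prod_nonempty_subsets_by_card[of "{1..d}"]
  by (simp add: MO_survival_copula_def MO_factor_def)

context
  fixes d :: nat and lam :: "nat set \<Rightarrow> real"
  assumes lam_pos: "\<And>S. S \<subseteq> {1..d} \<Longrightarrow> S \<noteq> {} \<Longrightarrow> lam S > 0"
begin

lemma MO_eta_nonneg:
  assumes "S \<subseteq> {1..d}" "S \<noteq> {}"
  shows "0 \<le> MO_eta d lam j S"
proof -
  have "0 \<le> (\<Sum>J\<in>{J. J \<subseteq> {1..d} \<and> j \<in> J}. lam J)"
    by (intro sum_nonneg less_imp_le[OF lam_pos]) auto
  with lam_pos[OF assms] show ?thesis
    unfolding MO_eta_def by simp
qed

lemma MO_eta_singleton_pos:
  assumes "l \<in> {1..d}"
  shows "0 < MO_eta d lam l {l}"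
proof -
  have "0 < (\<Sum>J\<in>{J. J \<subseteq> {1..d} \<and> l \<in> J}. lam J)"
    using assms by (intro sum_pos2[where i = "{l}"] lam_pos less_imp_le[OF lam_pos]) auto
  with lam_pos[of "{l}"] assms show ?thesis
    unfolding MO_eta_def by simp
qed

lemma MO_factor_pos:
  assumes "finite S" "S \<noteq> {}" "\<And>j. j \<in> S \<Longrightarrow> 0 < u j"
  shows "0 < MO_factor d lam u S"
  unfolding MO_factor_def using assms by (subst Min_gr_iff) force+

lemma MO_factor_mono:
  assumes "S \<subseteq> {1..d}" "S \<noteq> {}" "\<And>j. j \<in> S \<Longrightarrow> 0 \<le> u j \<and> u j \<le> v j"
  shows "MO_factor d lam u S \<le> MO_factor d lam v S"
proof -
  have fin: "finite S"
    using assms(1) by (rule finite_subset) simp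
  have "MO_factor d lam v S \<in> (\<lambda>j. v j powr MO_eta d lam j S) ` S"
    unfolding MO_factor_def using fin assms(2) by (intro Min_in) auto
  then obtain j where j: "j \<in> S" "MO_factor d lam v S = v j powr MO_eta d lam j S"
    by auto
  have "MO_factor d lam u S \<le> u j powr MO_eta d lam j S"
    unfolding MO_factor_def using fin j(1) by (intro Min_le) auto
  also have "\<dots> \<le> v j powr MO_eta d lam j S"
    using assms(3)[OF j(1)] MO_eta_nonneg[OF assms(1,2)] by (intro powr_mono2) auto
  finally show ?thesis
    using j(2) by simp
qed

lemma MO_survival_copula_pos:
  assumes "\<And>j. j \<in> {1..d} \<Longrightarrow> 0 < u j"
  shows "0 < MO_survival_copula d lam u"
  unfolding MO_survival_copula_eq_prod_factor
  using assms by (intro prod_pos) (auto intro!: MO_factor_pos intro: finite_subset[OF _ finite_atLeastAtMost])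

lemma MO_survival_copula_le_powr:
  assumes l: "l \<in> {1..d}" and v_l: "v l = 1"
    and uv: "\<And>j. j \<in> {1..d} \<Longrightarrow> 0 < u j \<and> u j \<le> v j"
  shows "MO_survival_copula d lam u \<le> u l powr MO_eta d lam l {l} * MO_survival_copula d lam v"
proof -
  define P where "P = {S. S \<subseteq> {1..d} \<and> S \<noteq> {}}"
  have "finite P" and "{l} \<in> P"
    using l by (auto simp: P_def)
  have factor_pos: "0 < MO_factor d lam u S" if "S \<in> P" for S
    using that uv by (intro MO_factor_pos) (auto simp: P_def intro: finite_subset[OF _ finite_atLeastAtMost])
  have factor_mono: "MO_factor d lam u S \<le> MO_factor d lam v S" if "S \<in> P" for S
    using that uv by (intro MO_factor_mono) (auto simp: P_def subset_iff less_imp_le)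
  have "MO_survival_copula d lam u = MO_factor d lam u {l} * (\<Prod>S\<in>P - {{l}}. MO_factor d lam u S)"
    unfolding MO_survival_copula_eq_prod_factor P_def[symmetric]
    by (rule prod.remove[OF \<open>finite P\<close> \<open>{l} \<in> P\<close>])
  also have "\<dots> = u l powr MO_eta d lam l {l} * (\<Prod>S\<in>P - {{l}}. MO_factor d lam u S)"
    by (simp only: MO_factor_singleton)
  also have "\<dots> \<le> u l powr MO_eta d lam l {l} * (\<Prod>S\<in>P - {{l}}. MO_factor d lam v S)"
    using factor_pos factor_mono by (intro mult_left_mono prod_mono) (auto simp: less_imp_le)
  also have "\<dots> = u l powr MO_eta d lam l {l} * MO_survival_copula d lam v"
    unfolding MO_survival_copula_eq_prod_factor P_def[symmetric]
    using prod.remove[OF \<open>finite P\<close> \<open>{l} \<in> P\<close>, of "MO_factor d lam v"]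
    by (simp add: MO_factor_singleton v_l)
  finally show ?thesis .
qed

lemma MO_marginal_diag_ratio_bounds:
  assumes "S \<subseteq> {1..d}" "l \<in> S" "0 < t" "t < 1"
  defines "r \<equiv> marginal_diag (MO_survival_copula d lam) S t
    / marginal_diag (MO_survival_copula d lam) (S - {l}) t"
  shows "0 \<le> r" and "r \<le> t powr MO_eta d lam l {l}"
proof -
  let ?C = "MO_survival_copula d lam"
  have "?C (\<lambda>j. if j \<in> S then t else 1)
      \<le> (if l \<in> S then t else 1) powr MO_eta d lam l {l} * ?C (\<lambda>j. if j \<in> S - {l} then t else 1)"
    using assms by (intro MO_survival_copula_le_powr) auto
  then have "marginal_diag ?C S t \<le> t powr MO_eta d lam l {l} * marginal_diag ?C (S - {l}) t"
    using \<open>l \<in> S\<close> by (simp add: marginal_diag_def)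
  moreover have "0 < marginal_diag ?C (S - {l}) t" "0 < marginal_diag ?C S t"
    unfolding marginal_diag_def using assms by (auto intro!: MO_survival_copula_pos)
  ultimately show "0 \<le> r" "r \<le> t powr MO_eta d lam l {l}"
    unfolding r_def by (simp_all add: divide_le_eq mult.commute)
qed

lemma MO_marginal_diag_ratio_tendsto_0:
  assumes "S \<subseteq> {1..d}" "l \<in> S"
  shows "((\<lambda>t. marginal_diag (MO_survival_copula d lam) S t
            / marginal_diag (MO_survival_copula d lam) (S - {l}) t) \<longlongrightarrow> 0) (at_right 0)"
proof -
  let ?ratio = "\<lambda>t. marginal_diag (MO_survival_copula d lam) S t
    / marginal_diag (MO_survival_copula d lam) (S - {l}) t"
  have powr_lim: "((\<lambda>t. t powr MO_eta d lam l {l}) \<longlongrightarrow> 0) (at_right 0)"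
  proof (rule tendsto_zero_powrI)
    show "((\<lambda>t. t) \<longlongrightarrow> 0) (at_right 0)"
      by (rule tendsto_ident_at)
    show "((\<lambda>t. MO_eta d lam l {l}) \<longlongrightarrow> MO_eta d lam l {l}) (at_right 0)"
      by (rule tendsto_const)
    show "\<forall>\<^sub>F t in at_right 0. 0 \<le> (t::real)"
      using eventually_at_right_less[of 0] by (rule eventually_mono) simp
    show "0 < MO_eta d lam l {l}"
      using assms by (intro MO_eta_singleton_pos) auto
  qed
  have near_0: "\<forall>\<^sub>F t in at_right 0. 0 < t \<and> t < (1::real)"
    by (auto simp: eventually_at_right_field intro: exI[of _ 1])
  show ?thesis
  proof (rule tendsto_sandwich[OF _ _ tendsto_const powr_lim])
    show "\<forall>\<^sub>F t in at_right 0. 0 \<le> ?ratio t"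
      using near_0 by eventually_elim (use MO_marginal_diag_ratio_bounds(1) assms in blast)
    show "\<forall>\<^sub>F t in at_right 0. ?ratio t \<le> t powr MO_eta d lam l {l}"
      using near_0 by eventually_elim (use MO_marginal_diag_ratio_bounds(2) assms in blast)
  qed
qed

end

theorem mainTheorem3:
  fixes d :: nat and lam :: "nat set \<Rightarrow> real"
  assumes "d \<ge> 2"
    and "\<And>S. S \<subseteq> {1..d} \<Longrightarrow> S \<noteq> {} \<Longrightarrow> lam S > 0"
  shows "mutually_asympt_indep d (MO_survival_copula d lam)"
  unfolding mutually_asympt_indep_def
  by (intro allI impI ballI MO_marginal_diag_ratio_tendsto_0[OF assms(2)]) auto

end
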